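(* Every factor-critical vertex-stable equimatchable graph is a complete graph on an odd number of vertices.
   Context: All graphs are finite and simple. A graph is equimatchable if all its maximal matchings have the same cardinality. A graph $G$ is vertex-stable equimatchable if $G$ is equimatchable and $G-v$ is equimatchable for every $v\in V(G)$. A graph $G$ is factor-critical if $G-v$ has a perfect matching for every $v\in V(G)$. *)

theory Defs
  imports Main
begin

definition graph :: "'a set \<Rightarrow> 'a set set \<Rightarrow> bool" where
  "graph V E \<longleftrightarrow> finite V \<and> (\<forall>e\<in>E. \<exists>u v. e = {u, v} \<and> u \<noteq> v \<and> u \<in> V \<and> v \<in> V)"

definition matching :: "'a set set \<Rightarrow> 'a set set \<Rightarrow> bool" where
  "matching E M \<longleftrightarrow> M \<subseteq> E \<and> (\<forall>e1\<in>M. \<forall>e2\<in>M. e1 \<noteq> e2 \<longrightarrow> e1 \<inter> e2 = {})"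

definition maximal_matching :: "'a set set \<Rightarrow> 'a set set \<Rightarrow> bool" where
  "maximal_matching E M \<longleftrightarrow> matching E M \<and> (\<forall>M'. matching E M' \<and> M \<subseteq> M' \<longrightarrow> M' = M)"

definition perfect_matching :: "'a set \<Rightarrow> 'a set set \<Rightarrow> 'a set set \<Rightarrow> bool" where
  "perfect_matching V E M \<longleftrightarrow> matching E M \<and> \<Union>M = V"

definition equimatchable :: "'a set set \<Rightarrow> bool" where
  "equimatchable E \<longleftrightarrow>
     (\<forall>M1 M2. maximal_matching E M1 \<and> maximal_matching E M2 \<longrightarrow> card M1 = card M2)"

definition del_edges :: "'a set set \<Rightarrow> 'a \<Rightarrow> 'a set set" where
  "del_edges E v = {e \<in> E. v \<notin> e}"

definition vertex_stable_equimatchable :: "'a set \<Rightarrow> 'a set set \<Rightarrow> bool" where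
  "vertex_stable_equimatchable V E \<longleftrightarrow>
     equimatchable E \<and> (\<forall>v\<in>V. equimatchable (del_edges E v))"

definition factor_critical :: "'a set \<Rightarrow> 'a set set \<Rightarrow> bool" where
  "factor_critical V E \<longleftrightarrow> (\<forall>v\<in>V. \<exists>M. perfect_matching (V - {v}) (del_edges E v) M)"

definition complete_graph :: "'a set \<Rightarrow> 'a set set \<Rightarrow> bool" where
  "complete_graph V E \<longleftrightarrow> E = {{u, v} | u v. u \<in> V \<and> v \<in> V \<and> u \<noteq> v}"

end

theory Submission
  imports Defs
begin

text \<open>Factor-criticality alone forces odd order, since G - v has a perfect matching.
  For completeness, let u, w be distinct non-adjacent vertices. A perfect matching M of
  G - u contains an edge {w, x}; removing it leaves a matching of G - x that leaves only
  u, w, x exposed, hence is maximal in G - x because u and w are not adjacent. It has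
  (n - 3)/2 edges, whereas a perfect matching of G - x has (n - 1)/2 edges, contradicting
  equimatchability of G - x.\<close>

lemma graph_edgeD:
  assumes "graph V E" and "e \<in> E"
  shows "\<exists>a b. e = {a, b} \<and> a \<noteq> b \<and> a \<in> V \<and> b \<in> V"
  using assms by (auto simp: graph_def)

lemma graph_del_edges: "graph V E \<Longrightarrow> graph V (del_edges E v)"
  by (auto simp: graph_def del_edges_def)

lemma card_Union_matching:
  assumes g: "graph V E" and m: "matching E M"
  shows "card (\<Union>M) = 2 * card M"
proof -
  have sub: "M \<subseteq> E" using m by (simp add: matching_def)
  have card2: "card e = 2" if "e \<in> M" for e
    using graph_edgeD[OF g] sub that by fastforce
  have "pairwise disjnt M"
    using m unfolding matching_def pairwise_def disjnt_def by blast
  moreover have "finite e" if "e \<in> M" for e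
    using card2[OF that] by (metis card.infinite zero_neq_numeral)
  ultimately have "card (\<Union>M) = sum card M" by (rule card_Union_disjoint)
  also have "\<dots> = 2 * card M" using card2 by simp
  finally show ?thesis .
qed

lemma maximal_matchingI:
  assumes m: "matching E M" and meets: "\<And>e. e \<in> E \<Longrightarrow> e \<inter> \<Union>M \<noteq> {}"
  shows "maximal_matching E M"
  unfolding maximal_matching_def
proof (intro conjI allI impI)
  show "matching E M" by (fact m)
  fix M' assume M': "matching E M' \<and> M \<subseteq> M'"
  show "M' = M"
  proof (rule ccontr)
    assume "M' \<noteq> M"
    then obtain e where e: "e \<in> M'" "e \<notin> M" using M' by blast
    then have "e \<in> E" using M' by (auto simp: matching_def)
    then obtain f where "f \<in> M" "e \<inter> f \<noteq> {}" using meets by blast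
    moreover have "f \<in> M'" "f \<noteq> e" using \<open>f \<in> M\<close> e M' by auto
    ultimately show False using M' e unfolding matching_def by blast
  qed
qed

lemma perfect_matching_maximal:
  assumes g: "graph V E" and p: "perfect_matching (V - {x}) (del_edges E x) P"
  shows "maximal_matching (del_edges E x) P"
proof (rule maximal_matchingI)
  show "matching (del_edges E x) P" using p by (simp add: perfect_matching_def)
  fix e assume "e \<in> del_edges E x"
  then show "e \<inter> \<Union>P \<noteq> {}"
    using p graph_edgeD[OF graph_del_edges[OF g]] by (fastforce simp: perfect_matching_def)
qed

lemma card_near_perfect_matching:
  assumes g: "graph V E" and x: "x \<in> V"
    and p: "perfect_matching (V - {x}) (del_edges E x) P"
  shows "card V = 2 * card P + 1"
proof -
  have "finite V" using g by (simp add: graph_def)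
  have "card (V - {x}) = 2 * card P"
    using p card_Union_matching[OF graph_del_edges[OF g], of x P]
    by (simp add: perfect_matching_def)
  moreover have "card (V - {x}) = card V - 1" and "card V > 0"
    using \<open>finite V\<close> x by (auto simp: card_gt_0_iff)
  ultimately show ?thesis by linarith
qed

lemma factor_critical_odd_card:
  assumes "graph V E" "V \<noteq> {}" "factor_critical V E"
  shows "odd (card V)"
proof -
  obtain x where x: "x \<in> V" using assms(2) by blast
  then obtain P where "perfect_matching (V - {x}) (del_edges E x) P"
    using assms(3) by (auto simp: factor_critical_def)
  then show ?thesis using card_near_perfect_matching[OF assms(1) x] by simp
qed

lemma matching_Diff_edge:
  assumes m: "matching E M" and f: "f \<in> M" and x: "x \<in> f"
  shows "matching (del_edges E x) (M - {f})" and "\<Union>(M - {f}) = \<Union>M - f"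
proof -
  have disj: "h \<inter> f = {}" if "h \<in> M" "h \<noteq> f" for h
    using m f that unfolding matching_def by blast
  show "matching (del_edges E x) (M - {f})"
    using m x disj unfolding matching_def del_edges_def by blast
  show "\<Union>(M - {f}) = \<Union>M - f" using disj by blast
qed

lemma perfect_matching_Diff_edge_maximal:
  assumes g: "graph V E" and M: "perfect_matching (V - {u}) (del_edges E u) M"
    and f: "{w, x} \<in> M" and nE: "{u, w} \<notin> E"
  shows "maximal_matching (del_edges E x) (M - {{w, x}})"
    and "\<Union>(M - {{w, x}}) = V - {u, w, x}"
proof -
  have Mm: "matching (del_edges E u) M" and UM: "\<Union>M = V - {u}"
    using M by (auto simp: perfect_matching_def)
  then have "matching E M" by (auto simp: matching_def del_edges_def)
  then have M'm: "matching (del_edges E x) (M - {{w, x}})"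
    and "\<Union>(M - {{w, x}}) = \<Union>M - {w, x}"
    using matching_Diff_edge[of E M "{w, x}" x] f by simp_all
  then show UM': "\<Union>(M - {{w, x}}) = V - {u, w, x}" by (auto simp: UM)
  show "maximal_matching (del_edges E x) (M - {{w, x}})"
  proof (rule maximal_matchingI[OF M'm])
    fix e assume "e \<in> del_edges E x"
    then have "e \<in> E" "x \<notin> e" by (simp_all add: del_edges_def)
    then obtain a b where ab: "e = {a, b}" "a \<noteq> b" "a \<in> V" "b \<in> V"
      using graph_edgeD[OF g] by blast
    show "e \<inter> \<Union>(M - {{w, x}}) \<noteq> {}"
    proof
      assume "e \<inter> \<Union>(M - {{w, x}}) = {}"
      then have "a \<in> {u, w}" "b \<in> {u, w}" using ab \<open>x \<notin> e\<close> UM' by auto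
      then have "e = {u, w}" using ab by auto
      then show False using \<open>e \<in> E\<close> nE by simp
    qed
  qed
qed

lemma factor_critical_stable_adjacent:
  assumes g: "graph V E" and fc: "factor_critical V E"
    and eq: "\<forall>v\<in>V. equimatchable (del_edges E v)"
    and u: "u \<in> V" and w: "w \<in> V" and uw: "u \<noteq> w"
  shows "{u, w} \<in> E"
proof (rule ccontr)
  assume nE: "{u, w} \<notin> E"
  obtain M where M: "perfect_matching (V - {u}) (del_edges E u) M"
    using fc u by (auto simp: factor_critical_def)
  then have Mm: "matching (del_edges E u) M" and "\<Union>M = V - {u}"
    by (auto simp: perfect_matching_def)
  then obtain f where f: "f \<in> M" "w \<in> f" using w uw by blast
  then have "f \<in> E" "u \<notin> f" using Mm by (auto simp: matching_def del_edges_def)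
  then obtain a b where "f = {a, b}" "a \<noteq> b" "a \<in> V" "b \<in> V"
    using graph_edgeD[OF g] by blast
  then obtain x where x: "f = {w, x}" "x \<noteq> w" "x \<in> V" "x \<noteq> u"
    using f(2) \<open>u \<notin> f\<close> by auto
  note M' = perfect_matching_Diff_edge_maximal[OF g M f(1)[unfolded x(1)] nE]
  obtain P where P: "perfect_matching (V - {x}) (del_edges E x) P"
    using fc x by (auto simp: factor_critical_def)
  have "card (M - {{w, x}}) = card P"
    using eq x M'(1) perfect_matching_maximal[OF g P] unfolding equimatchable_def by blast
  moreover have "card V = 2 * card P + 1"
    by (rule card_near_perfect_matching[OF g \<open>x \<in> V\<close> P])
  moreover have "card (V - {u, w, x}) = 2 * card (M - {{w, x}})"
    using card_Union_matching[OF graph_del_edges[OF g]] M'(1) M'(2)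
    by (metis maximal_matching_def)
  moreover have "card (V - {u, w, x}) = card V - 3" and "card V \<ge> 3"
  proof -
    have "finite V" using g by (simp add: graph_def)
    moreover have "{u, w, x} \<subseteq> V" using u w x by simp
    moreover have "card {u, w, x} = 3" using uw x by simp
    ultimately show "card (V - {u, w, x}) = card V - 3" and "card V \<ge> 3"
      by (metis card_Diff_subset finite_subset, metis card_mono)
  qed
  ultimately show False by linarith
qed

theorem lemma7p3:
  fixes V :: "'a set" and E :: "'a set set"
  assumes "graph V E" and "V \<noteq> {}"
    and "factor_critical V E" and "vertex_stable_equimatchable V E"
  shows "complete_graph V E \<and> odd (card V)"
proof
  have "\<forall>v\<in>V. equimatchable (del_edges E v)"
    using assms(4) by (simp add: vertex_stable_equimatchable_def)
  then have "{{u, w} | u w. u \<in> V \<and> w \<in> V \<and> u \<noteq> w} \<subseteq> E"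
    using factor_critical_stable_adjacent[OF assms(1,3)] by blast
  moreover have "E \<subseteq> {{u, w} | u w. u \<in> V \<and> w \<in> V \<and> u \<noteq> w}"
    using graph_edgeD[OF assms(1)] by blast
  ultimately show "complete_graph V E" by (auto simp: complete_graph_def)
  show "odd (card V)" by (rule factor_critical_odd_card[OF assms(1-3)])
qed

end
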